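(* For every instance $\pi$ of the fully labeled one-dimensional rearrangement problem (LOR) on $m$ cells, the plan produced by the algorithm SweepCyclesLOR is valid and uses the minimum number of pick-n-swap operations among all valid plans for $\pi$.
   Context: Setting (LOR). A row of $m$ cells $1,\dots,m$, cell $i$ located at the point $i$ on the real line. Each cell initially holds exactly one item; items carry distinct labels $1,\dots,m$. An instance is a permutation $\pi$ of $\{1,\dots,m\}$, where $\pi_i$ is the label of the item initially in cell $i$; the goal is that item $i$ ends in cell $i$ for every $i$. A robot end-effector can hold at most one item; it starts at the rest position $p_0=$ cell $1$ holding nothing. A pick-n-swap operation performed at a cell $p$ is: if the end-effector holds nothing, pick up the item in $p$; if it holds an item and $p$ contains an item, exchange the two (the held item is put into $p$ and the item of $p$ becomes held); if it holds an item and $p$ is empty, put the held item into $p$. A plan is a sequence $P=(p_0,p_1,\dots,p_N)$ of cells: the end-effector travels from $p_0$ to $p_1$, performs a pick-n-swap there, travels to $p_2$, and so on, and finally returns to $p_{N+1}:=p_0$. It is valid if at the end every item $i$ is in cell $i$ and the end-effector holds nothing. $N$ is the number of pick-n-swaps of $P$. SweepCyclesLOR: while some cell $i$ holds an item with label $\ne i$, let $i$ be the smallest such cell; go to $i$ and pick up its item, say with label $g$; while $g\neq i$, go to cell $g$ and swap (item $g$ is placed in cell $g$ and the item previously in cell $g$, with label $g'$, becomes held; set $g:=g'$); finally go to cell $i$ (now empty) and place the held item (label $i$). When no misplaced item remains, return to cell $1$. *)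

theory Defs
  imports "HOL-Combinatorics.Permutations" "HOL-Library.While_Combinator"
begin

text \<open>A configuration: contents of the cells (Some label, or None if empty),
  and the content of the end-effector (Some label, or None if it holds nothing).\<close>
type_synonym conf = "(nat \<Rightarrow> nat option) \<times> nat option"

text \<open>Pick-n-swap at cell p: in all three cases of the definition, the held content
  and the content of cell p are exchanged.\<close>
definition pns :: "nat \<Rightarrow> conf \<Rightarrow> conf" where
  "pns p c = ((fst c)(p := snd c), fst c p)"

definition exec :: "nat list \<Rightarrow> conf \<Rightarrow> conf" where
  "exec ps c = fold pns ps c"

definition init_conf :: "nat \<Rightarrow> (nat \<Rightarrow> nat) \<Rightarrow> conf" where
  "init_conf m \<pi> = ((\<lambda>i. if i \<in> {1..m} then Some (\<pi> i) else None), None)"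

text \<open>A plan (p_0,p_1,...,p_N) with p_0 = cell 1 is represented by the list [p_1,...,p_N]
  of cells where pick-n-swaps are performed; N is its length. The travel back to p_0
  performs no operation.\<close>
definition valid_plan :: "nat \<Rightarrow> (nat \<Rightarrow> nat) \<Rightarrow> nat list \<Rightarrow> bool" where
  "valid_plan m \<pi> ps \<longleftrightarrow> set ps \<subseteq> {1..m} \<and>
     (let c = exec ps (init_conf m \<pi>) in (\<forall>i\<in>{1..m}. fst c i = Some i) \<and> snd c = None)"

definition sweep_inner :: "nat \<Rightarrow> conf \<times> nat list \<Rightarrow> (conf \<times> nat list) option" where
  "sweep_inner i = while_option (\<lambda>(c, ps). snd c \<noteq> Some i)
      (\<lambda>(c, ps). let g = the (snd c) in (pns g c, ps @ [g]))"

definition sweep_body :: "nat \<Rightarrow> conf \<times> nat list \<Rightarrow> conf \<times> nat list" where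
  "sweep_body m = (\<lambda>(c, ps).
     let i = (LEAST i. 1 \<le> i \<and> i \<le> m \<and> fst c i \<noteq> Some i);
         (c2, ps2) = the (sweep_inner i (pns i c, ps @ [i]))
     in (pns i c2, ps2 @ [i]))"

definition sweep_cycles_LOR :: "nat \<Rightarrow> (nat \<Rightarrow> nat) \<Rightarrow> nat list" where
  "sweep_cycles_LOR m \<pi> = snd (the (while_option
      (\<lambda>(c, ps). \<exists>i\<in>{1..m}. fst c i \<noteq> Some i) (sweep_body m) (init_conf m \<pi>, [])))"

end

theory Submission
  imports Defs
begin

text \<open>Call a step of a plan placing if the held item is put into its own cell. Each misplaced
  cell x must eventually receive item x, and the last operation at x is then placing, so a
  valid plan has at least as many placing steps as misplaced cells. Conversely, the first
  operation touching a nontrivial cycle Z of \<pi>, say at cell z, cannot be placing, since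
  item z still lies untouched in another cell of Z; distinct cycles have distinct first steps, so
  there are at least as many non-placing steps as nontrivial cycles. SweepCyclesLOR spends
  exactly card Z + 1 operations on each cycle Z, one of them non-placing, and thus meets the
  sum of both bounds.\<close>

section \<open>A lower bound for valid plans\<close>

lemma pns_fst [simp]: "fst (pns p c) = (fst c)(p := snd c)"
  and pns_snd [simp]: "snd (pns p c) = fst c p"
  by (simp_all add: pns_def)

lemma exec_Nil [simp]: "exec [] c = c"
  by (simp add: exec_def)

lemma exec_snoc: "exec (ps @ [p]) c = pns p (exec ps c)"
  by (simp add: exec_def)

lemma exec_take_Suc:
  "t < length ps \<Longrightarrow> exec (take (Suc t) ps) c = pns (ps ! t) (exec (take t ps) c)"
  by (simp add: take_Suc_conv_app_nth exec_snoc)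

lemma exec_take_last_write:
  assumes "t \<le> u" "u \<le> length ps"
    and "fst (exec (take t ps) c) x \<noteq> fst (exec (take u ps) c) x"
  shows "\<exists>s. t \<le> s \<and> s < u \<and> ps ! s = x \<and>
           snd (exec (take s ps) c) = fst (exec (take u ps) c) x"
  using assms
proof (induction u)
  case 0
  then show ?case by simp
next
  case (Suc u)
  have step: "exec (take (Suc u) ps) c = pns (ps ! u) (exec (take u ps) c)"
    using Suc.prems by (simp add: exec_take_Suc)
  show ?case
  proof (cases "ps ! u = x")
    case True
    then show ?thesis using step by (intro exI[of _ u]) (use Suc.prems in \<open>auto simp: le_Suc_eq\<close>)
  next
    case False
    then have same: "fst (exec (take (Suc u) ps) c) x = fst (exec (take u ps) c) x"
      using step by simp
    then have "t \<noteq> Suc u" using Suc.prems by auto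
    then show ?thesis using Suc.IH Suc.prems same by (auto simp: less_Suc_eq)
  qed
qed

lemma exec_take_untouched:
  assumes "t \<le> u" "u \<le> length ps" "\<And>s. t \<le> s \<Longrightarrow> s < u \<Longrightarrow> ps ! s \<noteq> x"
  shows "fst (exec (take u ps) c) x = fst (exec (take t ps) c) x"
  using exec_take_last_write[OF assms(1,2), of c x] assms(3) by fastforce

definition labels_distinct :: "conf \<Rightarrow> bool" where
  "labels_distinct c \<longleftrightarrow> (\<forall>a b v. fst c a = Some v \<longrightarrow> fst c b = Some v \<longrightarrow> a = b) \<and>
     (\<forall>a v. fst c a = Some v \<longrightarrow> snd c \<noteq> Some v)"

lemma labels_distinct_pns: "labels_distinct c \<Longrightarrow> labels_distinct (pns p c)"
  unfolding labels_distinct_def by simp metis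

lemma labels_distinct_exec: "labels_distinct c \<Longrightarrow> labels_distinct (exec ps c)"
  unfolding exec_def by (induction ps arbitrary: c) (simp_all add: labels_distinct_pns)

lemma labels_distinct_init_conf:
  "\<pi> permutes {1..m} \<Longrightarrow> labels_distinct (init_conf m \<pi>)"
  using permutes_inj unfolding labels_distinct_def init_conf_def
  by (fastforce simp: inj_def split: if_splits)

definition placing_steps :: "nat list \<Rightarrow> conf \<Rightarrow> nat set" where
  "placing_steps ps c = {s. s < length ps \<and> snd (exec (take s ps) c) = Some (ps ! s)}"

lemma valid_plan_final_conf:
  "valid_plan m \<pi> ps \<Longrightarrow> x \<in> {1..m} \<Longrightarrow> fst (exec ps (init_conf m \<pi>)) x = Some x"
  by (simp add: valid_plan_def Let_def)

lemma valid_plan_places_moved: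
  assumes "valid_plan m \<pi> ps" "x \<in> {1..m}" "\<pi> x \<noteq> x"
  obtains s where "s \<in> placing_steps ps (init_conf m \<pi>)" "ps ! s = x"
proof -
  have "fst (exec (take 0 ps) (init_conf m \<pi>)) x \<noteq> fst (exec (take (length ps) ps) (init_conf m \<pi>)) x"
    using assms valid_plan_final_conf[OF assms(1,2)] by (simp add: init_conf_def)
  from exec_take_last_write[OF _ _ this] obtain s where
    "s < length ps" "ps ! s = x" "snd (exec (take s ps) (init_conf m \<pi>)) = Some x"
    using valid_plan_final_conf[OF assms(1,2)] by auto
  then show ?thesis using that by (simp add: placing_steps_def)
qed

lemma card_moved_le_placing_steps:
  assumes "valid_plan m \<pi> ps"
  shows "card {x\<in>{1..m}. \<pi> x \<noteq> x} \<le> card (placing_steps ps (init_conf m \<pi>))"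
proof -
  have "{x\<in>{1..m}. \<pi> x \<noteq> x} \<subseteq> (\<lambda>s. ps ! s) ` placing_steps ps (init_conf m \<pi>)"
  proof
    fix x assume "x \<in> {x\<in>{1..m}. \<pi> x \<noteq> x}"
    then obtain s where "s \<in> placing_steps ps (init_conf m \<pi>)" "ps ! s = x"
      using valid_plan_places_moved[OF assms] by blast
    then show "x \<in> (\<lambda>s. ps ! s) ` placing_steps ps (init_conf m \<pi>)" by blast
  qed
  then have "card {x\<in>{1..m}. \<pi> x \<noteq> x} \<le> card ((\<lambda>s. ps ! s) ` placing_steps ps (init_conf m \<pi>))"
    by (rule card_mono[rotated]) (simp add: placing_steps_def)
  also have "\<dots> \<le> card (placing_steps ps (init_conf m \<pi>))"
    by (rule card_image_le) (simp add: placing_steps_def)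
  finally show ?thesis .
qed

definition cycle_family :: "(nat \<Rightarrow> nat) \<Rightarrow> nat set set \<Rightarrow> bool" where
  "cycle_family \<pi> Zs \<longleftrightarrow> finite Zs \<and> disjoint Zs \<and>
     (\<forall>Z\<in>Zs. \<pi> ` Z = Z \<and> Z \<noteq> {} \<and> (\<forall>z\<in>Z. \<pi> z \<noteq> z))"

lemma first_step_into_cycle_not_placing:
  assumes perm: "\<pi> permutes {1..m}" and valid: "valid_plan m \<pi> ps"
    and Z: "\<pi> ` Z = Z" "Z \<noteq> {}" "\<forall>z\<in>Z. \<pi> z \<noteq> z" "Z \<subseteq> {1..m}"
  defines "s \<equiv> LEAST s. s < length ps \<and> ps ! s \<in> Z"
  shows "s \<in> {..<length ps} - placing_steps ps (init_conf m \<pi>)" "ps ! s \<in> Z"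
proof -
  define c where "c t = exec (take t ps) (init_conf m \<pi>)" for t
  obtain z where z: "z \<in> Z" using Z(2) by blast
  moreover obtain s' where "s' \<in> placing_steps ps (init_conf m \<pi>)" "ps ! s' = z"
    using valid_plan_places_moved[OF valid, of z] z Z(3,4) by blast
  ultimately have "\<exists>s. s < length ps \<and> ps ! s \<in> Z" by (auto simp: placing_steps_def)
  then have s: "s < length ps" "ps ! s \<in> Z"
    unfolding s_def by (metis (mono_tags, lifting) LeastI_ex)+
  then show "ps ! s \<in> Z" by simp
  obtain z' where z': "z' \<in> Z" "\<pi> z' = ps ! s" using s(2) Z(1) by (metis imageE)
  have untouched: "ps ! s' \<noteq> z'" if "s' < s" for s'
  proof -
    have "\<not> (s' < length ps \<and> ps ! s' \<in> Z)"
      using that unfolding s_def by (rule not_less_Least)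
    then show ?thesis using that s(1) z'(1) by auto
  qed
  have "fst (c s) z' = fst (c 0) z'"
    unfolding c_def using s(1) untouched by (intro exec_take_untouched) auto
  then have "fst (c s) z' = Some (ps ! s)"
    using z' Z(4) by (auto simp: c_def init_conf_def)
  moreover have "labels_distinct (c s)"
    unfolding c_def by (intro labels_distinct_exec labels_distinct_init_conf perm)
  ultimately have "snd (c s) \<noteq> Some (ps ! s)"
    unfolding labels_distinct_def by blast
  then show "s \<in> {..<length ps} - placing_steps ps (init_conf m \<pi>)"
    using s(1) by (simp add: placing_steps_def c_def)
qed

lemma card_cycle_family_le_non_placing_steps:
  assumes perm: "\<pi> permutes {1..m}" and valid: "valid_plan m \<pi> ps"
    and Zs: "cycle_family \<pi> Zs" "\<Union>Zs \<subseteq> {1..m}"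
  shows "card Zs \<le> card ({..<length ps} - placing_steps ps (init_conf m \<pi>))"
proof -
  define first where "first Z = (LEAST s. s < length ps \<and> ps ! s \<in> Z)" for Z
  have first: "first Z \<in> {..<length ps} - placing_steps ps (init_conf m \<pi>)" "ps ! first Z \<in> Z"
    if "Z \<in> Zs" for Z
    using first_step_into_cycle_not_placing[OF perm valid, of Z] that Zs
    by (auto simp: cycle_family_def first_def)
  have "inj_on first Zs"
  proof (rule inj_onI)
    fix X Y assume "X \<in> Zs" "Y \<in> Zs" "first X = first Y"
    then have "ps ! first X \<in> X \<inter> Y" using first(2) by (metis IntI)
    moreover have "disjoint Zs" using Zs(1) by (simp add: cycle_family_def)
    ultimately show "X = Y" using \<open>X \<in> Zs\<close> \<open>Y \<in> Zs\<close> by (auto simp: disjoint_def)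
  qed
  then show ?thesis
    by (rule card_inj_on_le) (use first in auto)
qed

theorem valid_plan_length_lower_bound:
  assumes "\<pi> permutes {1..m}" "valid_plan m \<pi> ps" "cycle_family \<pi> Zs" "\<Union>Zs \<subseteq> {1..m}"
  shows "card {x\<in>{1..m}. \<pi> x \<noteq> x} + card Zs \<le> length ps"
proof -
  have "placing_steps ps (init_conf m \<pi>) \<subseteq> {..<length ps}"
    by (auto simp: placing_steps_def)
  then have "card (placing_steps ps (init_conf m \<pi>)) +
      card ({..<length ps} - placing_steps ps (init_conf m \<pi>)) = length ps"
    by (metis card_Diff_subset card_lessThan card_mono finite_lessThan finite_subset le_add_diff_inverse)
  then show ?thesis
    using card_moved_le_placing_steps[OF assms(2)] card_cycle_family_le_non_placing_steps[OF assms] by linarith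
qed

section \<open>SweepCyclesLOR meets the bound\<close>

lemma while_option_invariant_measure:
  fixes f :: "'s \<Rightarrow> nat"
  assumes step: "\<And>s. P s \<Longrightarrow> b s \<Longrightarrow> P (c s) \<and> f (c s) < f s" and init: "P s"
  obtains t where "while_option b c s = Some t" "P t" "\<not> b t"
proof -
  obtain t where t: "while_option b c s = Some t"
    using measure_while_option_Some[of P b c f, OF step init] by blast
  moreover have "P t" using while_option_rule[of P b c, OF _ t init] step by blast
  ultimately show ?thesis using that while_option_stop[OF t] by blast
qed

lemma cycle_family_insert:
  assumes "cycle_family \<pi> Zs" "\<pi> ` Z = Z" "Z \<noteq> {}" "\<forall>z\<in>Z. \<pi> z \<noteq> z" "Z \<inter> \<Union>Zs = {}"
  shows "cycle_family \<pi> (insert Z Zs)" "card (insert Z Zs) = card Zs + 1"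
proof -
  have "Z \<notin> Zs" using assms(3,5) by blast
  then show "card (insert Z Zs) = card Zs + 1"
    using assms(1) by (simp add: cycle_family_def)
  show "cycle_family \<pi> (insert Z Zs)"
    using assms unfolding cycle_family_def by (auto simp: pairwise_insert disjnt_def)
qed

context
  fixes m :: nat and \<pi> :: "nat \<Rightarrow> nat"
  assumes perm: "\<pi> permutes {1..m}"
begin

definition misplaced :: "conf \<Rightarrow> nat set" where
  "misplaced c = {j\<in>{1..m}. fst c j \<noteq> Some j}"

lemma finite_misplaced: "finite (misplaced c)"
  by (simp add: misplaced_def)

definition done_cells :: "conf \<Rightarrow> nat set" where
  "done_cells c = {j\<in>{1..m}. fst c j = Some j \<and> \<pi> j \<noteq> j}"

text \<open>Each completed cycle Z has cost card Z + 1 operations: the pick at its first cell,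
  card Z - 1 swaps and the final put-down.\<close>
definition outer_inv :: "conf \<Rightarrow> nat list \<Rightarrow> bool" where
  "outer_inv c ps \<longleftrightarrow> exec ps (init_conf m \<pi>) = c \<and> set ps \<subseteq> {1..m} \<and> snd c = None \<and>
     (\<forall>j\<in>{1..m}. fst c j = Some j \<or> fst c j = Some (\<pi> j)) \<and>
     (\<exists>Zs. cycle_family \<pi> Zs \<and> \<Union>Zs = done_cells c \<and> length ps = card (done_cells c) + card Zs)"

text \<open>N is the sorted part \<pi> i, ..., \<pi>^k i of the cycle of i and g = \<pi>^(k+1) i is held;
  the equation for \<pi> ` insert i N expresses this without iterating \<pi>.\<close>
definition inner_inv :: "conf \<Rightarrow> nat list \<Rightarrow> nat \<Rightarrow> nat set \<Rightarrow> conf \<Rightarrow> nat list \<Rightarrow> bool" where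
  "inner_inv c0 ps0 i N c ps \<longleftrightarrow> exec ps (init_conf m \<pi>) = c \<and> set ps \<subseteq> {1..m} \<and>
     length ps = length ps0 + 1 + card N \<and> fst c i = None \<and> i \<notin> N \<and> N \<subseteq> {1..m} \<and>
     (\<exists>g. snd c = Some g \<and> g \<notin> N \<and> \<pi> ` insert i N = insert g N) \<and>
     (\<forall>j\<in>N. fst c j = Some j \<and> fst c0 j = Some (\<pi> j) \<and> \<pi> j \<noteq> j) \<and>
     (\<forall>j. j \<notin> insert i N \<longrightarrow> fst c j = fst c0 j)"

lemma outer_inv_init: "outer_inv (init_conf m \<pi>) []"
proof -
  have "done_cells (init_conf m \<pi>) = {}" by (auto simp: done_cells_def init_conf_def)
  then show ?thesis
    unfolding outer_inv_def by (intro conjI exI[of _ "{}"]) (auto simp: init_conf_def cycle_family_def)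
qed

lemma outer_inv_done_cells_closed:
  assumes "outer_inv c ps"
  shows "\<pi> ` done_cells c = done_cells c"
proof -
  obtain Zs where Zs: "cycle_family \<pi> Zs" "\<Union>Zs = done_cells c"
    using assms by (auto simp: outer_inv_def)
  have "\<pi> ` (\<Union>Z\<in>Zs. Z) = (\<Union>Z\<in>Zs. \<pi> ` Z)" by (rule image_UN)
  also have "\<dots> = (\<Union>Z\<in>Zs. Z)" using Zs(1) by (intro SUP_cong) (auto simp: cycle_family_def)
  finally show ?thesis using Zs(2) by simp
qed

lemma inner_inv_start:
  assumes "outer_inv c0 ps0" "i \<in> {1..m}" "fst c0 i = Some (\<pi> i)"
  shows "inner_inv c0 ps0 i {} (pns i c0) (ps0 @ [i])"
  using assms by (auto simp: outer_inv_def inner_inv_def exec_snoc)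

lemma inner_inv_next_cell:
  assumes outer: "outer_inv c0 ps0" and i: "i \<in> {1..m}" "fst c0 i = Some (\<pi> i)" "\<pi> i \<noteq> i"
    and inner: "inner_inv c0 ps0 i N c ps" and g: "snd c = Some g" "g \<noteq> i"
  shows "g \<in> {1..m}" "fst c0 g = Some (\<pi> g)" "\<pi> g \<noteq> g" "\<pi> g \<notin> insert g N"
proof -
  have inj: "inj \<pi>" using perm by (rule permutes_inj)
  have N: "g \<notin> N" "\<pi> ` insert i N = insert g N" "N \<subseteq> {1..m}"
    "\<forall>j\<in>N. fst c0 j = Some (\<pi> j) \<and> \<pi> j \<noteq> j"
    using inner g(1) by (auto simp: inner_inv_def)
  have visited_undone: "x \<notin> done_cells c0" if "x \<in> insert i N" for x
    using that i(2,3) N(4) by (auto simp: done_cells_def)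
  obtain x where x: "x \<in> insert i N" "g = \<pi> x"
    using N(2) by blast
  have g_new: "g \<notin> insert i N" using g(2) N(1) by simp
  show "g \<in> {1..m}"
    using x N(3) i(1) permutes_in_image[OF perm] by auto
  show moved: "\<pi> g \<noteq> g"
    using x g_new inj by (metis injD)
  have "g \<notin> done_cells c0"
  proof
    assume "g \<in> done_cells c0"
    then have "g \<in> \<pi> ` done_cells c0" using outer_inv_done_cells_closed[OF outer] by simp
    then show False using x visited_undone inj by (metis imageE injD)
  qed
  then show "fst c0 g = Some (\<pi> g)"
    using outer moved \<open>g \<in> {1..m}\<close> by (auto simp: outer_inv_def done_cells_def)
  show "\<pi> g \<notin> insert g N"
  proof
    assume "\<pi> g \<in> insert g N"
    then obtain y where "y \<in> insert i N" "\<pi> g = \<pi> y" using N(2) by (metis imageE)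
    then show False using g_new inj by (metis injD)
  qed
qed

lemma inner_inv_step:
  assumes outer: "outer_inv c0 ps0" and i: "i \<in> {1..m}" "fst c0 i = Some (\<pi> i)" "\<pi> i \<noteq> i"
    and inner: "inner_inv c0 ps0 i N c ps" and g: "snd c = Some g" "g \<noteq> i"
  shows "inner_inv c0 ps0 i (insert g N) (pns g c) (ps @ [g])"
    and "card (misplaced (pns g c)) < card (misplaced c)"
proof -
  note next_cell = inner_inv_next_cell[OF assms]
  have g_new: "g \<notin> insert i N" using inner g by (auto simp: inner_inv_def)
  then have cg: "fst c g = Some (\<pi> g)" using inner next_cell(2) by (simp add: inner_inv_def)
  have finN: "finite N" using inner by (auto simp: inner_inv_def finite_subset)
  have "\<pi> ` insert i (insert g N) = insert (\<pi> g) (insert g N)"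
    using inner g(1) by (auto simp: inner_inv_def insert_commute)
  then show "inner_inv c0 ps0 i (insert g N) (pns g c) (ps @ [g])"
    using inner g next_cell cg finN by (auto simp: inner_inv_def exec_snoc)
  have "misplaced (pns g c) = misplaced c - {g}" "g \<in> misplaced c"
    using g(1) cg next_cell(1,3) by (auto simp: misplaced_def)
  then show "card (misplaced (pns g c)) < card (misplaced c)"
    by (metis card_Diff1_less finite_misplaced)
qed

lemma sweep_inner_closes_cycle:
  assumes outer: "outer_inv c0 ps0" and i: "i \<in> {1..m}" "fst c0 i = Some (\<pi> i)" "\<pi> i \<noteq> i"
  obtains N c ps where "sweep_inner i (pns i c0, ps0 @ [i]) = Some (c, ps)"
    "inner_inv c0 ps0 i N c ps" "snd c = Some i"
proof -
  let ?P = "\<lambda>(c, ps). \<exists>N. inner_inv c0 ps0 i N c ps"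
  let ?b = "\<lambda>(c, ps). snd c \<noteq> Some i"
  let ?step = "\<lambda>(c, ps). let g = the (snd c) in (pns g c, ps @ [g])"
  have step: "?P (?step s) \<and> card (misplaced (fst (?step s))) < card (misplaced (fst s))"
    if "?P s" "?b s" for s
  proof -
    obtain c ps N where s: "s = (c, ps)" and inner: "inner_inv c0 ps0 i N c ps"
      using \<open>?P s\<close> by auto
    obtain g where g: "snd c = Some g" "g \<noteq> i"
      using inner \<open>?b s\<close> s by (auto simp: inner_inv_def)
    show ?thesis
      using inner_inv_step[OF outer i inner g] s g by auto
  qed
  have "?P (pns i c0, ps0 @ [i])"
    using inner_inv_start[OF outer i(1,2)] by blast
  then obtain t where "while_option ?b ?step (pns i c0, ps0 @ [i]) = Some t" "?P t" "\<not> ?b t"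
    using while_option_invariant_measure[where f = "\<lambda>s. card (misplaced (fst s))", OF step] by blast
  then show ?thesis
    using that unfolding sweep_inner_def by (cases t) auto
qed

lemma outer_inv_close_cycle:
  assumes outer: "outer_inv c0 ps0" and i: "i \<in> {1..m}" "fst c0 i = Some (\<pi> i)" "\<pi> i \<noteq> i"
    and inner: "inner_inv c0 ps0 i N c ps" and closed: "snd c = Some i"
  shows "outer_inv (pns i c) (ps @ [i])"
    and "misplaced (pns i c) = misplaced c0 - insert i N"
proof -
  define Z where "Z = insert i N"
  have N: "i \<notin> N" "N \<subseteq> {1..m}" "\<pi> ` Z = Z" "fst c i = None"
    "length ps = length ps0 + 1 + card N"
    using inner closed by (auto simp: inner_inv_def Z_def)
  have in_Z: "fst (pns i c) j = Some j \<and> \<pi> j \<noteq> j \<and> fst c0 j = Some (\<pi> j)" if "j \<in> Z" for j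
    using that i inner closed by (auto simp: inner_inv_def Z_def)
  have off_Z: "fst (pns i c) j = fst c0 j" if "j \<notin> Z" for j
    using that inner by (auto simp: inner_inv_def Z_def)
  have Z_sub: "Z \<subseteq> {1..m}" using N(2) i(1) by (simp add: Z_def)
  have Z_undone: "Z \<inter> done_cells c0 = {}"
    using in_Z by (auto simp: done_cells_def)
  have done_cells: "done_cells (pns i c) = done_cells c0 \<union> Z"
    using in_Z off_Z Z_sub by (auto simp: done_cells_def) (metis option.inject)+
  have "j \<in> misplaced (pns i c) \<longleftrightarrow> j \<in> misplaced c0 - Z" for j
    by (cases "j \<in> Z") (use in_Z[of j] off_Z[of j] Z_sub in \<open>auto simp del: pns_fst simp: misplaced_def\<close>)
  then show "misplaced (pns i c) = misplaced c0 - insert i N"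
    unfolding Z_def by blast
  obtain Zs where Zs: "cycle_family \<pi> Zs" "\<Union>Zs = done_cells c0"
    "length ps0 = card (done_cells c0) + card Zs"
    using outer by (auto simp: outer_inv_def)
  have new_Zs: "cycle_family \<pi> (insert Z Zs)" "card (insert Z Zs) = card Zs + 1"
    using cycle_family_insert[OF Zs(1) N(3)] in_Z Z_undone Zs(2) by (auto simp: Z_def)
  have "card (done_cells (pns i c)) = card (done_cells c0) + card N + 1"
    using done_cells Z_undone N(1,2) finite_subset[OF Z_sub]
    by (simp add: card_Un_disjoint Int_commute done_cells_def Z_def)
  then have "length (ps @ [i]) = card (done_cells (pns i c)) + card (insert Z Zs)"
    using N(5) Zs(3) new_Zs(2) by simp
  moreover have "fst (pns i c) j = Some j \<or> fst (pns i c) j = Some (\<pi> j)" if "j \<in> {1..m}" for j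
    using in_Z[of j] off_Z[of j] outer that by (cases "j \<in> Z") (simp_all add: outer_inv_def)
  moreover have "exec (ps @ [i]) (init_conf m \<pi>) = pns i c" "set (ps @ [i]) \<subseteq> {1..m}"
    using inner i(1) by (simp_all add: inner_inv_def exec_snoc)
  moreover have "snd (pns i c) = None" "\<Union>(insert Z Zs) = done_cells (pns i c)"
    using N(4) done_cells Zs(2) by auto
  ultimately show "outer_inv (pns i c) (ps @ [i])"
    unfolding outer_inv_def using new_Zs(1) by blast
qed

lemma sweep_body_step:
  assumes outer: "outer_inv c ps" and unsorted: "misplaced c \<noteq> {}"
  shows "case_prod outer_inv (sweep_body m (c, ps))"
    and "card (misplaced (fst (sweep_body m (c, ps)))) < card (misplaced c)"
proof -
  define i where "i = (LEAST i. 1 \<le> i \<and> i \<le> m \<and> fst c i \<noteq> Some i)"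
  have "1 \<le> i \<and> i \<le> m \<and> fst c i \<noteq> Some i"
    unfolding i_def by (rule LeastI_ex) (use unsorted in \<open>auto simp: misplaced_def\<close>)
  then have i: "i \<in> {1..m}" "fst c i = Some (\<pi> i)" "\<pi> i \<noteq> i"
    using outer by (auto simp: outer_inv_def)
  obtain N c' ps' where inner_loop: "sweep_inner i (pns i c, ps @ [i]) = Some (c', ps')"
    and inner: "inner_inv c ps i N c' ps'" and closed: "snd c' = Some i"
    by (rule sweep_inner_closes_cycle[OF outer i])
  have body: "sweep_body m (c, ps) = (pns i c', ps' @ [i])"
    unfolding sweep_body_def Let_def by (simp only: prod.case i_def[symmetric]) (simp add: inner_loop)
  show "case_prod outer_inv (sweep_body m (c, ps))"
    using outer_inv_close_cycle(1)[OF outer i inner closed] body by simp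
  have "i \<in> misplaced c" using i by (simp add: misplaced_def)
  then have "misplaced (pns i c') \<subset> misplaced c"
    using outer_inv_close_cycle(2)[OF outer i inner closed] by blast
  then show "card (misplaced (fst (sweep_body m (c, ps)))) < card (misplaced c)"
    using body finite_misplaced by (simp add: psubset_card_mono)
qed

lemma sweep_cycles_LOR_final_conf:
  obtains c where "outer_inv c (sweep_cycles_LOR m \<pi>)" "misplaced c = {}"
proof -
  let ?b = "\<lambda>(c, ps). \<exists>i\<in>{1..m}. fst c i \<noteq> Some i"
  have step: "case_prod outer_inv (sweep_body m s) \<and>
      card (misplaced (fst (sweep_body m s))) < card (misplaced (fst s))"
    if "case_prod outer_inv s" "?b s" for s
  proof -
    obtain c ps where s: "s = (c, ps)" by (cases s)
    have "misplaced c \<noteq> {}" using that(2) s by (auto simp: misplaced_def)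
    then show ?thesis using sweep_body_step[of c ps] that(1) s by simp
  qed
  have init: "case_prod outer_inv (init_conf m \<pi>, [])" using outer_inv_init by simp
  obtain t where "while_option ?b (sweep_body m) (init_conf m \<pi>, []) = Some t"
    "case_prod outer_inv t" "\<not> ?b t"
    using while_option_invariant_measure[where P = "case_prod outer_inv", OF step init] by blast
  then show ?thesis
    using that by (cases t) (auto simp: sweep_cycles_LOR_def misplaced_def)
qed

lemma valid_plan_sweep_cycles_LOR: "valid_plan m \<pi> (sweep_cycles_LOR m \<pi>)"
proof -
  obtain c where "outer_inv c (sweep_cycles_LOR m \<pi>)" "misplaced c = {}"
    by (rule sweep_cycles_LOR_final_conf)
  then show ?thesis by (auto simp: outer_inv_def misplaced_def valid_plan_def)
qed

lemma length_sweep_cycles_LOR: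
  obtains Zs where "cycle_family \<pi> Zs" "\<Union>Zs \<subseteq> {1..m}"
    "length (sweep_cycles_LOR m \<pi>) = card {x\<in>{1..m}. \<pi> x \<noteq> x} + card Zs"
proof -
  obtain c where outer: "outer_inv c (sweep_cycles_LOR m \<pi>)" and sorted: "misplaced c = {}"
    by (rule sweep_cycles_LOR_final_conf)
  have done_cells: "done_cells c = {x\<in>{1..m}. \<pi> x \<noteq> x}"
    using sorted by (auto simp: misplaced_def done_cells_def)
  obtain Zs where "cycle_family \<pi> Zs" "\<Union>Zs = done_cells c"
    "length (sweep_cycles_LOR m \<pi>) = card (done_cells c) + card Zs"
    using outer by (auto simp: outer_inv_def)
  moreover have "done_cells c \<subseteq> {1..m}" by (auto simp: done_cells_def)
  ultimately show ?thesis
    using that done_cells by simp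
qed

end

theorem proposition1:
  fixes m :: nat and \<pi> :: "nat \<Rightarrow> nat"
  assumes "\<pi> permutes {1..m}"
  shows "valid_plan m \<pi> (sweep_cycles_LOR m \<pi>) \<and>
         (\<forall>ps. valid_plan m \<pi> ps \<longrightarrow> length (sweep_cycles_LOR m \<pi>) \<le> length ps)"
proof (intro conjI allI impI)
  show "valid_plan m \<pi> (sweep_cycles_LOR m \<pi>)"
    using assms by (rule valid_plan_sweep_cycles_LOR)
  fix ps assume valid: "valid_plan m \<pi> ps"
  obtain Zs where Zs: "cycle_family \<pi> Zs" "\<Union>Zs \<subseteq> {1..m}"
    and length: "length (sweep_cycles_LOR m \<pi>) = card {x\<in>{1..m}. \<pi> x \<noteq> x} + card Zs"
    using assms by (rule length_sweep_cycles_LOR)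
  show "length (sweep_cycles_LOR m \<pi>) \<le> length ps"
    unfolding length using valid_plan_length_lower_bound[OF assms valid Zs] .
qed

end
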